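(* Let $G$, $w$, $\nu$ be as in the context. Let $\widehat{\mathcal{S}}=(S_m)_{m=0,\ldots,n}$ be a finite sequence of pairwise disjoint subsets of $V(G)$ (not necessarily covering $V(G)$), and assume $\widehat{K}_m>0$ and $\widehat{D}_m>0$ for all $m=0,\ldots,n-1$. Write $f_0=f|_{S_0}$. Then for all $1<p<\infty$, $1<q<\infty$ with $1/p+1/q=1$, and all $f\in\ell^p_\nu(G)$, \[ \|f\|_{p,\nu}+\left(\sum_{m=1}^n\left(\sum_{k=0}^{m-1}\frac{1}{\widehat{K}_k^{q/p}}\left(\prod_{i=k}^{m-1}\frac{\widehat{K}_i}{\widehat{D}_i}\right)^{q/p}\right)^{p/q}\right)^{1/p}\|\nabla_w f\|_p\ \ge\ \left(\sum_{m=0}^n\prod_{j=0}^{m-1}\frac{\widehat{K}_j}{\widehat{D}_j}\right)^{1/p}\|f_0\|_{p,\nu}. \] Moreover, for all $f\in\ell^1_\nu(G)$, \[ \|f\|_{1,\nu}+\max_{k=0,\ldots,n-1}\frac{1}{\widehat{K}_k}\sum_{m=k}^n\left(\prod_{i=k}^{m-1}\frac{\widehat{K}_i}{\widehat{D}_i}\right)\|\nabla_w f\|_1\ \ge\ \left(\sum_{m=0}^n\prod_{j=0}^{m-1}\frac{\widehat{K}_j}{\widehat{D}_j}\right)\|f_0\|_{1,\nu}. \]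
   Context: $G$ is an undirected weighted graph: $V(G)$ is a (countable) vertex set and $w:V(G)\times V(G)\to[0,\infty)$ is symmetric with $w(u,u)=0$; edges are pairs with $w(u,v)\neq0$. $\nu:V(G)\to(0,\infty)$ is a fixed vertex weight. $\ell^p_\nu(G)$ is the space of $f:V(G)\to\mathbb{C}$ with $\|f\|_{p,\nu}=\left(\sum_{v}|f(v)|^p\nu(v)\right)^{1/p}<\infty$, and $\|f|_A\|_{p,\nu}$ is the same sum over $v\in A$. $\|\nabla_w f\|_p=\left(\sum_{u,v\in V(G)}|f(u)-f(v)|^pw(u,v)\right)^{1/p}$. For $A\subset V(G)$, $w_A(v)=\sum_{u\in A}w(u,v)$. For the sequence $\widehat{\mathcal{S}}=(S_m)_{m=0,\ldots,n}$ and $0\le m<n$: $\widehat{K}_m=\inf_{v\in S_m}\frac{w_{S_{m+1}}(v)}{\nu(v)}$ and $\widehat{D}_m=\sup_{v\in S_{m+1}}\frac{w_{S_m}(v)}{\nu(v)}$. Empty products equal $1$, empty sums equal $0$. *)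

theory Defs
  imports "HOL-Analysis.Analysis"
begin

text \<open>Weighted graph on the vertex type 'v: edge weight w, vertex weight nu.\<close>

definition lp_sum :: "('v \<Rightarrow> real) \<Rightarrow> real \<Rightarrow> ('v \<Rightarrow> complex) \<Rightarrow> 'v set \<Rightarrow> real" where
  "lp_sum nu p f A = infsum (\<lambda>v. cmod (f v) powr p * nu v) A"

definition in_lp :: "('v \<Rightarrow> real) \<Rightarrow> real \<Rightarrow> ('v \<Rightarrow> complex) \<Rightarrow> bool" where
  "in_lp nu p f \<longleftrightarrow> (\<lambda>v. cmod (f v) powr p * nu v) summable_on UNIV"

definition pnorm_on :: "('v \<Rightarrow> real) \<Rightarrow> real \<Rightarrow> ('v \<Rightarrow> complex) \<Rightarrow> 'v set \<Rightarrow> real" where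
  "pnorm_on nu p f A = lp_sum nu p f A powr (1 / p)"

definition grad_norm :: "('v \<Rightarrow> 'v \<Rightarrow> real) \<Rightarrow> real \<Rightarrow> ('v \<Rightarrow> complex) \<Rightarrow> ereal" where
  "grad_norm w p f =
     (if (\<lambda>(u, v). cmod (f u - f v) powr p * w u v) summable_on UNIV
      then ereal ((infsum (\<lambda>(u, v). cmod (f u - f v) powr p * w u v) UNIV) powr (1 / p))
      else \<infinity>)"

definition wA :: "('v \<Rightarrow> 'v \<Rightarrow> real) \<Rightarrow> 'v set \<Rightarrow> 'v \<Rightarrow> ereal" where
  "wA w A v = (if (\<lambda>u. w u v) summable_on A then ereal (infsum (\<lambda>u. w u v) A) else \<infinity>)"

definition Khat :: "('v \<Rightarrow> 'v \<Rightarrow> real) \<Rightarrow> ('v \<Rightarrow> real) \<Rightarrow> (nat \<Rightarrow> 'v set) \<Rightarrow> nat \<Rightarrow> ereal" where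
  "Khat w nu S m = (INF v\<in>S m. wA w (S (Suc m)) v / ereal (nu v))"

definition Dhat :: "('v \<Rightarrow> 'v \<Rightarrow> real) \<Rightarrow> ('v \<Rightarrow> real) \<Rightarrow> (nat \<Rightarrow> 'v set) \<Rightarrow> nat \<Rightarrow> ereal" where
  "Dhat w nu S m = (SUP v\<in>S (Suc m). wA w (S m) v / ereal (nu v))"

end

theory Submission
  imports Defs
begin

text \<open>On the edges between consecutive layers S m and S (Suc m), the triangle inequality
  |f x| \<le> |f y| + |f x - f y| is weighted by w and summed with Minkowski's inequality. Since the weight
  a vertex of S m sends to S (Suc m) is at least K m times its vertex weight, and the weight a vertex of
  S (Suc m) receives from S m is at most D m times its vertex weight, this gives
  K m^(1/p) |f on S m| \<le> D m^(1/p) |f on S (Suc m)| + |gradient on S m \<times> S (Suc m)|.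
  Iterating from S 0 bounds (\<Prod>j<m. K j / D j)^(1/p) |f on S 0| by |f on S m| plus a combination
  of the local gradients. For p > 1 one sums the p-th powers over m and uses Minkowski in m and
  Hoelder in k; for p = 1 one exchanges the two sums, which produces the maximum over k.\<close>

lemma convex_on_powr_nonneg:
  fixes p :: real
  assumes p: "1 \<le> p"
  shows "convex_on {0..} (\<lambda>x::real. x powr p)"
proof (rule convex_onI)
  have powr_le_self: "s powr p \<le> s" if "0 \<le> s" "s \<le> 1" for s :: real
    using that powr_mono'[OF p, of s] by simp
  fix t x y :: real
  assume t: "0 < t" "t < 1" and x: "x \<in> {0..}" and y: "y \<in> {0..}"
  consider "x = 0" | "y = 0" | "0 < x" "0 < y" using x y by fastforce
  then show "((1 - t) *\<^sub>R x + t *\<^sub>R y) powr p \<le> (1 - t) * x powr p + t * y powr p"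
  proof cases
    case 1
    have "(t * y) powr p = t powr p * y powr p" using t y by (simp add: powr_mult)
    also have "\<dots> \<le> t * y powr p" using powr_le_self[of t] t by (intro mult_right_mono) auto
    finally show ?thesis using 1 by simp
  next
    case 2
    have "((1 - t) * x) powr p = (1 - t) powr p * x powr p" using t x by (simp add: powr_mult)
    also have "\<dots> \<le> (1 - t) * x powr p" using powr_le_self[of "1 - t"] t by (intro mult_right_mono) auto
    finally show ?thesis using 2 by simp
  next
    case 3
    then show ?thesis using convex_onD[OF powr_convex[OF p], of t x y] t by simp
  qed
qed (simp add: convex_real_interval)

lemma minkowski_infsum_degenerate:
  fixes W x y :: "'a \<Rightarrow> real"
  assumes nonneg: "\<And>i. i \<in> I \<Longrightarrow> 0 \<le> W i"
    and sx: "(\<lambda>i. W i * x i powr p) summable_on I"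
    and sy: "(\<lambda>i. W i * y i powr p) summable_on I"
    and zero: "infsum (\<lambda>i. W i * x i powr p) I = 0"
  shows "(\<lambda>i. W i * (x i + y i) powr p) summable_on I \<and>
    infsum (\<lambda>i. W i * (x i + y i) powr p) I = infsum (\<lambda>i. W i * y i powr p) I"
proof -
  have eq: "W i * (x i + y i) powr p = W i * y i powr p" if i: "i \<in> I" for i
  proof -
    have "W i * x i powr p = 0"
      using nonneg_infsum_le_0D[OF _ sx _ i] zero nonneg by simp
    then show ?thesis by (cases "W i = 0") simp_all
  qed
  show ?thesis
    using sy by (simp add: eq cong: summable_on_cong infsum_cong)
qed

lemma powr_add_le_convex:
  fixes p A B x y :: real
  assumes p: "1 \<le> p" and A: "0 < A" and B: "0 < B" and x: "0 \<le> x" and y: "0 \<le> y"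
  shows "(x + y) powr p \<le> (A + B) powr p * (A / (A + B) * (x / A) powr p + B / (A + B) * (y / B) powr p)"
proof -
  define t where "t = A / (A + B)"
  have t: "0 \<le> t" "t \<le> 1" "1 - t = B / (A + B)"
    using A B by (auto simp: t_def field_simps)
  have "(1 - t) * (y / B) = y / (A + B)"
    using A B by (simp add: t(3))
  moreover have "t * (x / A) = x / (A + B)"
    using A by (simp add: t_def)
  ultimately have "x + y = (A + B) * ((1 - t) *\<^sub>R (y / B) + t *\<^sub>R (x / A))"
    using A B by (simp add: add_divide_distrib[symmetric])
  then have "(x + y) powr p = (A + B) powr p * ((1 - t) *\<^sub>R (y / B) + t *\<^sub>R (x / A)) powr p"
    using A B x y t by (simp add: powr_mult)
  also have "\<dots> \<le> (A + B) powr p * ((1 - t) * (y / B) powr p + t * (x / A) powr p)"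
    using convex_onD[OF convex_on_powr_nonneg[OF p], of t "y / B" "x / A"] A B x y t
    by (intro mult_left_mono) auto
  also have "\<dots> = (A + B) powr p * (A / (A + B) * (x / A) powr p + B / (A + B) * (y / B) powr p)"
    unfolding t(3) by (simp add: t_def add.commute)
  finally show ?thesis .
qed

lemma minkowski_infsum_pos:
  fixes W x y :: "'a \<Rightarrow> real"
  assumes p: "1 \<le> p"
    and nonneg: "\<And>i. i \<in> I \<Longrightarrow> 0 \<le> W i \<and> 0 \<le> x i \<and> 0 \<le> y i"
    and sx: "(\<lambda>i. W i * x i powr p) summable_on I"
    and sy: "(\<lambda>i. W i * y i powr p) summable_on I"
    and SA_pos: "0 < infsum (\<lambda>i. W i * x i powr p) I"
    and SB_pos: "0 < infsum (\<lambda>i. W i * y i powr p) I"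
  shows "(\<lambda>i. W i * (x i + y i) powr p) summable_on I \<and>
    infsum (\<lambda>i. W i * (x i + y i) powr p) I powr (1/p)
      \<le> infsum (\<lambda>i. W i * x i powr p) I powr (1/p) + infsum (\<lambda>i. W i * y i powr p) I powr (1/p)"
proof -
  define SA where "SA = infsum (\<lambda>i. W i * x i powr p) I"
  define SB where "SB = infsum (\<lambda>i. W i * y i powr p) I"
  define A where "A = SA powr (1/p)"
  define B where "B = SB powr (1/p)"
  have A: "0 < A" "A powr p = SA" and B: "0 < B" "B powr p = SB"
    using SA_pos SB_pos p by (auto simp: A_def B_def SA_def SB_def powr_powr)
  define R where
    "R i = (A + B) powr p * (A / (A + B) / SA * (W i * x i powr p) + B / (A + B) / SB * (W i * y i powr p))"
    for i
  have pointwise: "W i * (x i + y i) powr p \<le> R i" if i: "i \<in> I" for i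
  proof -
    have xy: "0 \<le> x i" "0 \<le> y i" "0 \<le> W i" using nonneg[OF i] by auto
    have "(x i + y i) powr p \<le> (A + B) powr p * (A / (A + B) / SA * x i powr p + B / (A + B) / SB * y i powr p)"
      using powr_add_le_convex[OF p A(1) B(1) xy(1,2)] A B xy by (simp add: powr_divide)
    then have "W i * (x i + y i) powr p
        \<le> W i * ((A + B) powr p * (A / (A + B) / SA * x i powr p + B / (A + B) / SB * y i powr p))"
      using xy by (intro mult_left_mono) auto
    then show ?thesis
      unfolding R_def by (simp add: algebra_simps)
  qed
  have sR: "R summable_on I"
    unfolding R_def by (intro summable_on_cmult_right summable_on_add sx sy)
  have "infsum R I = (A + B) powr p * (infsum (\<lambda>i. A / (A + B) / SA * (W i * x i powr p)) I
      + infsum (\<lambda>i. B / (A + B) / SB * (W i * y i powr p)) I)"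
    unfolding R_def
    by (subst infsum_cmult_right', subst infsum_add) (intro summable_on_cmult_right sx sy refl)+
  also have "\<dots> = (A + B) powr p * (A / (A + B) / SA * SA + B / (A + B) / SB * SB)"
    by (simp only: infsum_cmult_right' flip: SA_def SB_def)
  also have "\<dots> = (A + B) powr p"
    using A B SA_pos SB_pos by (simp add: add_divide_distrib[symmetric] flip: SA_def SB_def)
  finally have iR: "infsum R I = (A + B) powr p" .
  have sZ: "(\<lambda>i. W i * (x i + y i) powr p) summable_on I"
    using nonneg pointwise by (intro summable_on_comparison_test[OF sR]) auto
  have "infsum (\<lambda>i. W i * (x i + y i) powr p) I powr (1/p) \<le> ((A + B) powr p) powr (1/p)"
    using infsum_mono[OF sZ sR pointwise] iR nonneg p
    by (intro powr_mono2) (auto intro!: infsum_nonneg)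
  also have "\<dots> = A + B"
    using A B p by (simp add: powr_powr)
  finally show ?thesis
    using sZ by (simp add: A_def B_def SA_def SB_def)
qed

lemma minkowski_infsum:
  fixes W x y :: "'a \<Rightarrow> real"
  assumes p: "1 \<le> p"
    and nonneg: "\<And>i. i \<in> I \<Longrightarrow> 0 \<le> W i \<and> 0 \<le> x i \<and> 0 \<le> y i"
    and sx: "(\<lambda>i. W i * x i powr p) summable_on I"
    and sy: "(\<lambda>i. W i * y i powr p) summable_on I"
  shows "(\<lambda>i. W i * (x i + y i) powr p) summable_on I \<and>
    infsum (\<lambda>i. W i * (x i + y i) powr p) I powr (1/p)
      \<le> infsum (\<lambda>i. W i * x i powr p) I powr (1/p) + infsum (\<lambda>i. W i * y i powr p) I powr (1/p)"
proof -
  have W: "\<And>i. i \<in> I \<Longrightarrow> 0 \<le> W i" using nonneg by blast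
  have SA: "0 \<le> infsum (\<lambda>i. W i * x i powr p) I" and SB: "0 \<le> infsum (\<lambda>i. W i * y i powr p) I"
    using W by (auto intro!: infsum_nonneg)
  consider "infsum (\<lambda>i. W i * x i powr p) I = 0" | "infsum (\<lambda>i. W i * y i powr p) I = 0"
    | "0 < infsum (\<lambda>i. W i * x i powr p) I" "0 < infsum (\<lambda>i. W i * y i powr p) I"
    using SA SB by linarith
  then show ?thesis
  proof cases
    case 1
    then show ?thesis using minkowski_infsum_degenerate[OF W sx sy] by simp
  next
    case 2
    then show ?thesis using minkowski_infsum_degenerate[OF W sy sx] by (simp add: add.commute)
  next
    case 3
    then show ?thesis using minkowski_infsum_pos[OF p nonneg sx sy] by simp
  qed
qed

lemma holder_inequality_sum:
  fixes c e :: "'a \<Rightarrow> real"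
  assumes F: "finite F" and pq: "1 < p" "1 < q" "1/p + 1/q = 1"
    and c: "\<And>i. i \<in> F \<Longrightarrow> 0 \<le> c i" and e: "\<And>i. i \<in> F \<Longrightarrow> 0 \<le> e i"
  shows "(\<Sum>i\<in>F. c i * e i) \<le> (\<Sum>i\<in>F. c i powr q) powr (1/q) * (\<Sum>i\<in>F. e i powr p) powr (1/p)"
proof -
  define Cq where "Cq = (\<Sum>i\<in>F. c i powr q)"
  define Ep where "Ep = (\<Sum>i\<in>F. e i powr p)"
  have "0 \<le> Cq" "0 \<le> Ep" unfolding Cq_def Ep_def by (auto intro: sum_nonneg)
  show ?thesis
  proof (cases "Cq = 0 \<or> Ep = 0")
    case True
    then have "\<forall>i\<in>F. c i = 0 \<or> e i = 0"
      using F by (auto simp: Cq_def Ep_def sum_nonneg_eq_0_iff)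
    then have "(\<Sum>i\<in>F. c i * e i) = 0" by (intro sum.neutral) auto
    then show ?thesis by (simp flip: Cq_def Ep_def)
  next
    case False
    with \<open>0 \<le> Cq\<close> \<open>0 \<le> Ep\<close> have Cq: "0 < Cq" and Ep: "0 < Ep" by auto
    define \<alpha> where "\<alpha> = Cq powr (1/q)"
    define \<beta> where "\<beta> = Ep powr (1/p)"
    have \<alpha>: "0 < \<alpha>" "\<alpha> powr q = Cq" and \<beta>: "0 < \<beta>" "\<beta> powr p = Ep"
      using Cq Ep pq by (auto simp: \<alpha>_def \<beta>_def powr_powr)
    have young: "c i * e i / (\<alpha> * \<beta>) \<le> c i powr q / (Cq * q) + e i powr p / (Ep * p)"
      if i: "i \<in> F" for i
    proof -
      have "(c i / \<alpha>) * (e i / \<beta>) \<le> (c i / \<alpha>) powr q / q + (e i / \<beta>) powr p / p"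
        using Youngs_inequality[of q p "c i / \<alpha>" "e i / \<beta>"] pq c[OF i] e[OF i] \<alpha> \<beta>
        by (simp add: add.commute)
      then show ?thesis
        using c[OF i] e[OF i] \<alpha> \<beta> by (simp add: powr_divide)
    qed
    have "(\<Sum>i\<in>F. c i * e i) / (\<alpha> * \<beta>) \<le> (\<Sum>i\<in>F. c i powr q / (Cq * q) + e i powr p / (Ep * p))"
      unfolding sum_divide_distrib by (rule sum_mono) (rule young)
    also have "\<dots> = 1"
      using Cq Ep pq by (simp add: sum.distrib Cq_def Ep_def flip: sum_divide_distrib)
    finally show ?thesis
      using \<alpha> \<beta> by (simp add: divide_le_eq \<alpha>_def \<beta>_def Cq_def Ep_def)
  qed
qed

lemma ereal_le_add_mult:
  fixes a b C :: real and G :: ereal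
  assumes "0 \<le> C" and "G \<noteq> -\<infinity>"
    and "G = \<infinity> \<Longrightarrow> b \<le> a \<or> 0 < C"
    and "\<And>g. G = ereal g \<Longrightarrow> b \<le> a + C * g"
  shows "ereal b \<le> ereal a + ereal C * G"
  using assms by (cases G) auto

definition edge_sum :: "('v \<Rightarrow> 'v \<Rightarrow> real) \<Rightarrow> real \<Rightarrow> ('v \<Rightarrow> complex) \<Rightarrow> ('v \<times> 'v) set \<Rightarrow> real"
  where "edge_sum w p f E = infsum (\<lambda>(u, v). cmod (f u - f v) powr p * w u v) E"

lemma grad_norm_not_minf: "grad_norm w p f \<noteq> -\<infinity>"
  by (simp add: grad_norm_def)

lemma grad_norm_eq_ereal:
  assumes "grad_norm w p f = ereal g"
  shows "(\<lambda>(u, v). cmod (f u - f v) powr p * w u v) summable_on UNIV \<and> g = edge_sum w p f UNIV powr (1/p)"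
  using assms by (auto simp: grad_norm_def edge_sum_def split: if_splits)

locale graph_layers =
  fixes w :: "'v \<Rightarrow> 'v \<Rightarrow> real" and nu :: "'v \<Rightarrow> real" and S :: "nat \<Rightarrow> 'v set" and n :: nat
  assumes w_nonneg: "\<And>u v. 0 \<le> w u v"
    and w_sym: "\<And>u v. w u v = w v u"
    and nu_pos: "\<And>v. 0 < nu v"
    and layers_disjoint: "\<And>i j. i \<le> n \<Longrightarrow> j \<le> n \<Longrightarrow> i \<noteq> j \<Longrightarrow> S i \<inter> S j = {}"
    and Khat_pos_finite: "\<And>m. m < n \<Longrightarrow> 0 < Khat w nu S m \<and> Khat w nu S m < \<infinity>"
    and Dhat_pos_finite: "\<And>m. m < n \<Longrightarrow> 0 < Dhat w nu S m \<and> Dhat w nu S m < \<infinity>"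
begin

definition K :: "nat \<Rightarrow> real" where "K m = real_of_ereal (Khat w nu S m)"

definition D :: "nat \<Rightarrow> real" where "D m = real_of_ereal (Dhat w nu S m)"

definition chain_coeff :: "nat \<Rightarrow> nat \<Rightarrow> real"
  where "chain_coeff k m = 1 / K k * (\<Prod>i\<in>{k..<m}. K i / D i)"

lemma Khat_eq: "m < n \<Longrightarrow> Khat w nu S m = ereal (K m)"
  using Khat_pos_finite[of m] unfolding K_def by (cases "Khat w nu S m") auto

lemma Dhat_eq: "m < n \<Longrightarrow> Dhat w nu S m = ereal (D m)"
  using Dhat_pos_finite[of m] unfolding D_def by (cases "Dhat w nu S m") auto

lemma K_pos: "m < n \<Longrightarrow> 0 < K m"
  using Khat_pos_finite[of m] unfolding K_def by (cases "Khat w nu S m") auto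

lemma D_pos: "m < n \<Longrightarrow> 0 < D m"
  using Dhat_pos_finite[of m] unfolding D_def by (cases "Dhat w nu S m") auto

lemma wA_nonneg: "0 \<le> wA w A v"
  unfolding wA_def using w_nonneg by (auto intro: infsum_nonneg)

lemma K_nonneg: "0 \<le> K m"
proof -
  have "0 \<le> wA w (S (Suc m)) v / ereal (nu v)" for v
    using wA_nonneg[of "S (Suc m)" v] nu_pos[of v] by (cases "wA w (S (Suc m)) v") auto
  then have "0 \<le> Khat w nu S m"
    unfolding Khat_def by (intro INF_greatest)
  then show ?thesis
    unfolding K_def by (rule real_of_ereal_pos)
qed

lemma D_nonneg: "0 \<le> D m"
proof (cases "S (Suc m) = {}")
  case True
  then show ?thesis unfolding D_def Dhat_def by (simp add: bot_ereal_def)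
next
  case False
  then obtain v where v: "v \<in> S (Suc m)" by blast
  have "0 \<le> wA w (S m) v / ereal (nu v)"
    using wA_nonneg[of "S m" v] nu_pos[of v] by (cases "wA w (S m) v") auto
  also have "\<dots> \<le> Dhat w nu S m"
    unfolding Dhat_def using v by (rule SUP_upper)
  finally show ?thesis
    unfolding D_def by (rule real_of_ereal_pos)
qed

lemma chain_coeff_nonneg: "0 \<le> chain_coeff k m"
  unfolding chain_coeff_def
  by (intro mult_nonneg_nonneg prod_nonneg divide_nonneg_nonneg K_nonneg D_nonneg) simp_all

lemma chain_coeff_pos: "k < m \<Longrightarrow> m \<le> n \<Longrightarrow> 0 < chain_coeff k m"
  unfolding chain_coeff_def by (intro mult_pos_pos prod_pos divide_pos_pos K_pos D_pos) auto

lemma chain_coeff_self: "chain_coeff m m = 1 / K m"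
  by (simp add: chain_coeff_def)

lemma chain_coeff_Suc: "k \<le> m \<Longrightarrow> chain_coeff k (Suc m) = K m / D m * chain_coeff k m"
  by (simp add: chain_coeff_def prod.atLeastLessThan_Suc mult_ac)

lemma chain_coeff_powr:
  "chain_coeff k m powr r = 1 / K k powr r * (\<Prod>i\<in>{k..<m}. K i / D i) powr r"
  unfolding chain_coeff_def using K_nonneg D_nonneg
  by (simp add: powr_mult powr_divide prod_nonneg)

lemma K_nu_le_infsum_weight:
  assumes m: "m < n" and v: "v \<in> S m" and s: "(\<lambda>u. w u v) summable_on S (Suc m)"
  shows "K m * nu v \<le> infsum (\<lambda>u. w u v) (S (Suc m))"
proof -
  have "Khat w nu S m \<le> wA w (S (Suc m)) v / ereal (nu v)"
    unfolding Khat_def using v by (rule INF_lower)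
  then have "K m \<le> infsum (\<lambda>u. w u v) (S (Suc m)) / nu v"
    using s nu_pos[of v] Khat_eq[OF m] by (simp add: wA_def)
  then show ?thesis
    using nu_pos[of v] by (simp add: field_simps)
qed

lemma infsum_weight_le_D_nu:
  assumes m: "m < n" and v: "v \<in> S (Suc m)"
  shows "(\<lambda>u. w u v) summable_on S m \<and> infsum (\<lambda>u. w u v) (S m) \<le> D m * nu v"
proof -
  have le: "wA w (S m) v / ereal (nu v) \<le> ereal (D m)"
    unfolding Dhat_eq[OF m, symmetric] Dhat_def using v by (rule SUP_upper)
  then have s: "(\<lambda>u. w u v) summable_on S m"
    using nu_pos[of v] by (auto simp: wA_def split: if_splits)
  then have "infsum (\<lambda>u. w u v) (S m) / nu v \<le> D m"
    using le nu_pos[of v] by (simp add: wA_def)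
  then show ?thesis
    using s nu_pos[of v] by (simp add: field_simps)
qed

lemma lp_sum_nonneg: "0 \<le> lp_sum nu p f A"
  unfolding lp_sum_def using nu_pos by (intro infsum_nonneg mult_nonneg_nonneg) (auto simp: less_imp_le)

lemma edge_sum_nonneg: "0 \<le> edge_sum w p f E"
  unfolding edge_sum_def using w_nonneg by (intro infsum_nonneg) auto

lemma summable_lp_summand: "in_lp nu p f \<Longrightarrow> (\<lambda>v. cmod (f v) powr p * nu v) summable_on A"
  unfolding in_lp_def by (erule summable_on_subset_banach) simp

lemma pnorm_on_mono:
  assumes "in_lp nu p f" "0 \<le> p" "A \<subseteq> B"
  shows "pnorm_on nu p f A \<le> pnorm_on nu p f B"
proof -
  have "lp_sum nu p f A \<le> lp_sum nu p f B"
    unfolding lp_sum_def using assms(1,3) nu_pos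
    by (intro infsum_mono_neutral summable_lp_summand) (auto simp: less_imp_le)
  then show ?thesis
    unfolding pnorm_on_def using assms(2) lp_sum_nonneg by (intro powr_mono2) auto
qed

lemma sum_layers_lp_sum_le:
  assumes "in_lp nu p f"
  shows "(\<Sum>m\<le>n. lp_sum nu p f (S m)) \<le> lp_sum nu p f UNIV"
proof -
  have "(\<Sum>m\<le>n. lp_sum nu p f (S m)) = lp_sum nu p f (\<Union>m\<le>n. S m)"
    unfolding lp_sum_def using assms
    by (intro sum_infsum summable_lp_summand) (auto dest: layers_disjoint)
  also have "\<dots> \<le> lp_sum nu p f UNIV"
    unfolding lp_sum_def using assms nu_pos
    by (intro infsum_mono_neutral summable_lp_summand) (auto simp: less_imp_le)
  finally show ?thesis .
qed

lemma sum_layers_edge_sum_le: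
  assumes grad: "(\<lambda>(u, v). cmod (f u - f v) powr p * w u v) summable_on UNIV" and "m \<le> n"
  shows "(\<Sum>k<m. edge_sum w p f (S k \<times> S (Suc k))) \<le> edge_sum w p f UNIV"
proof -
  have s: "(\<lambda>(u, v). cmod (f u - f v) powr p * w u v) summable_on E" for E
    using grad by (rule summable_on_subset_banach) simp
  have "S k \<times> S (Suc k) \<inter> S k' \<times> S (Suc k') = {}" if "k < m" "k' < m" "k \<noteq> k'" for k k'
    using layers_disjoint[of k k'] that \<open>m \<le> n\<close> by auto
  then have "(\<Sum>k<m. edge_sum w p f (S k \<times> S (Suc k))) = edge_sum w p f (\<Union>k<m. S k \<times> S (Suc k))"
    unfolding edge_sum_def by (intro sum_infsum s) auto
  also have "\<dots> \<le> edge_sum w p f UNIV"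
    unfolding edge_sum_def using w_nonneg by (intro infsum_mono_neutral s) auto
  finally show ?thesis .
qed

context
  fixes p :: real and f :: "'v \<Rightarrow> complex"
  assumes f: "in_lp nu p f"
begin

lemma upper_cross_sum:
  assumes m: "m < n"
  shows "(\<lambda>(x, y). w x y * cmod (f y) powr p) summable_on S m \<times> S (Suc m) \<and>
    infsum (\<lambda>(x, y). w x y * cmod (f y) powr p) (S m \<times> S (Suc m)) \<le> D m * lp_sum nu p f (S (Suc m))"
proof -
  define g where "g y = infsum (\<lambda>x. w x y) (S m) * cmod (f y) powr p" for y
  have inner: "((\<lambda>x. w x y * cmod (f y) powr p) has_sum g y) (S m)" if "y \<in> S (Suc m)" for y
    unfolding g_def using infsum_weight_le_D_nu[OF m that]
    by (intro has_sum_cmult_left has_sum_infsum) auto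
  have g_le: "g y \<le> D m * (cmod (f y) powr p * nu y)" if "y \<in> S (Suc m)" for y
  proof -
    have "g y \<le> (D m * nu y) * cmod (f y) powr p"
      unfolding g_def using infsum_weight_le_D_nu[OF m that] by (intro mult_right_mono) auto
    then show ?thesis by (simp add: algebra_simps)
  qed
  have g_nonneg: "0 \<le> g y" for y
    unfolding g_def using w_nonneg by (intro mult_nonneg_nonneg infsum_nonneg) auto
  have sg: "g summable_on S (Suc m)"
    using g_le g_nonneg
    by (intro summable_on_comparison_test[OF summable_on_cmult_right[OF summable_lp_summand[OF f]]]) auto
  have "((\<lambda>(y, x). w x y * cmod (f y) powr p) has_sum infsum g (S (Suc m))) (S (Suc m) \<times> S m)"
  proof (rule has_sum_SigmaI[where g = g])
    show "((\<lambda>x. case (y, x) of (y, x) \<Rightarrow> w x y * cmod (f y) powr p) has_sum g y) (S m)"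
      if "y \<in> S (Suc m)" for y
      using inner[OF that] by simp
    show "(g has_sum infsum g (S (Suc m))) (S (Suc m))"
      using sg by (rule has_sum_infsum)
    show "(\<lambda>(y, x). w x y * cmod (f y) powr p) summable_on S (Suc m) \<times> S m"
      by (rule summable_on_SigmaI[where g = g]) (use inner sg w_nonneg in auto)
  qed
  then have "((\<lambda>(x, y). w x y * cmod (f y) powr p) has_sum infsum g (S (Suc m))) (S m \<times> S (Suc m))"
    by (subst has_sum_swap) simp
  moreover have "infsum g (S (Suc m)) \<le> D m * lp_sum nu p f (S (Suc m))"
    unfolding lp_sum_def infsum_cmult_right'[symmetric]
    by (rule infsum_mono[OF sg summable_on_cmult_right[OF summable_lp_summand[OF f]] g_le])
  ultimately show ?thesis
    by (auto dest: has_sum_imp_summable simp: infsumI)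
qed

lemma lower_cross_sum:
  assumes m: "m < n" and s: "(\<lambda>(x, y). w x y * cmod (f x) powr p) summable_on S m \<times> S (Suc m)"
  shows "K m * lp_sum nu p f (S m) \<le> infsum (\<lambda>(x, y). w x y * cmod (f x) powr p) (S m \<times> S (Suc m))"
proof -
  have row: "K m * (cmod (f x) powr p * nu x) \<le> infsum (\<lambda>y. w x y * cmod (f x) powr p) (S (Suc m))"
    if x: "x \<in> S m" for x
  proof (cases "cmod (f x) powr p = 0")
    case True
    then show ?thesis by simp
  next
    case False
    have "(\<lambda>y. w x y * cmod (f x) powr p) summable_on S (Suc m)"
      using summable_on_SigmaD1[OF s x] by simp
    then have "(\<lambda>u. w u x) summable_on S (Suc m)"
      using False summable_on_cmult_left' by (subst w_sym) blast
    then have "K m * nu x \<le> infsum (\<lambda>y. w x y) (S (Suc m))"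
      using K_nu_le_infsum_weight[OF m x] by (simp add: w_sym)
    then have "K m * nu x * cmod (f x) powr p \<le> infsum (\<lambda>y. w x y) (S (Suc m)) * cmod (f x) powr p"
      by (rule mult_right_mono) simp
    then show ?thesis
      by (simp add: infsum_cmult_left' algebra_simps)
  qed
  have "K m * lp_sum nu p f (S m) = infsum (\<lambda>x. K m * (cmod (f x) powr p * nu x)) (S m)"
    unfolding lp_sum_def by (rule infsum_cmult_right'[symmetric])
  also have "\<dots> \<le> infsum (\<lambda>x. infsum (\<lambda>y. w x y * cmod (f x) powr p) (S (Suc m))) (S m)"
    by (rule infsum_mono[OF summable_on_cmult_right[OF summable_lp_summand[OF f]]
          summable_on_Sigma_banach[OF s] row])
  also have "\<dots> = infsum (\<lambda>(x, y). w x y * cmod (f x) powr p) (S m \<times> S (Suc m))"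
    by (rule infsum_Sigma'_banach[OF s])
  finally show ?thesis .
qed

lemma layer_step:
  assumes p: "1 \<le> p" and m: "m < n"
    and grad: "(\<lambda>(u, v). cmod (f u - f v) powr p * w u v) summable_on S m \<times> S (Suc m)"
  shows "K m powr (1/p) * pnorm_on nu p f (S m)
    \<le> D m powr (1/p) * pnorm_on nu p f (S (Suc m)) + edge_sum w p f (S m \<times> S (Suc m)) powr (1/p)"
proof -
  let ?I = "S m \<times> S (Suc m)"
  define W where "W i = w (fst i) (snd i)" for i :: "'v \<times> 'v"
  define a where "a i = cmod (f (snd i))" for i :: "'v \<times> 'v"
  define d where "d i = cmod (f (fst i) - f (snd i))" for i :: "'v \<times> 'v"
  have sa: "(\<lambda>i. W i * a i powr p) summable_on ?I"
    using upper_cross_sum[OF m] by (simp add: W_def a_def case_prod_unfold)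
  have sd: "(\<lambda>i. W i * d i powr p) summable_on ?I"
    using grad by (simp add: W_def d_def case_prod_unfold mult.commute)
  have mink: "(\<lambda>i. W i * (a i + d i) powr p) summable_on ?I \<and>
    infsum (\<lambda>i. W i * (a i + d i) powr p) ?I powr (1/p)
      \<le> infsum (\<lambda>i. W i * a i powr p) ?I powr (1/p) + infsum (\<lambda>i. W i * d i powr p) ?I powr (1/p)"
    using w_nonneg by (intro minkowski_infsum[OF p _ sa sd]) (simp add: W_def a_def d_def)
  have triangle: "W i * cmod (f (fst i)) powr p \<le> W i * (a i + d i) powr p" for i
  proof -
    have "cmod (f (fst i)) \<le> a i + d i"
      unfolding a_def d_def using norm_triangle_ineq[of "f (snd i)" "f (fst i) - f (snd i)"] by simp
    then show ?thesis
      unfolding W_def using p w_nonneg by (intro mult_left_mono powr_mono2) auto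
  qed
  have s_lower: "(\<lambda>i. W i * cmod (f (fst i)) powr p) summable_on ?I"
    by (rule summable_on_comparison_test[OF conjunct1[OF mink] triangle]) (simp add: W_def w_nonneg)
  have "K m * lp_sum nu p f (S m) \<le> infsum (\<lambda>i. W i * cmod (f (fst i)) powr p) ?I"
    using lower_cross_sum[OF m] s_lower by (simp add: W_def case_prod_unfold)
  also have "\<dots> \<le> infsum (\<lambda>i. W i * (a i + d i) powr p) ?I"
    using mink by (intro infsum_mono[OF s_lower _ triangle]) simp
  finally have K_le: "K m * lp_sum nu p f (S m) \<le> infsum (\<lambda>i. W i * (a i + d i) powr p) ?I" .
  have "K m powr (1/p) * pnorm_on nu p f (S m) = (K m * lp_sum nu p f (S m)) powr (1/p)"
    unfolding pnorm_on_def using K_nonneg lp_sum_nonneg by (simp add: powr_mult)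
  also have "\<dots> \<le> infsum (\<lambda>i. W i * (a i + d i) powr p) ?I powr (1/p)"
    using K_le K_nonneg lp_sum_nonneg p by (intro powr_mono2) auto
  also have "\<dots> \<le> infsum (\<lambda>i. W i * a i powr p) ?I powr (1/p) + infsum (\<lambda>i. W i * d i powr p) ?I powr (1/p)"
    using mink by blast
  also have "infsum (\<lambda>i. W i * a i powr p) ?I powr (1/p) \<le> (D m * lp_sum nu p f (S (Suc m))) powr (1/p)"
  proof -
    have "infsum (\<lambda>i. W i * a i powr p) ?I = infsum (\<lambda>(x, y). w x y * cmod (f y) powr p) ?I"
      by (simp add: W_def a_def case_prod_unfold)
    moreover have "0 \<le> infsum (\<lambda>i. W i * a i powr p) ?I"
      using w_nonneg by (intro infsum_nonneg) (simp add: W_def)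
    ultimately show ?thesis
      using upper_cross_sum[OF m] p by (intro powr_mono2) auto
  qed
  also have "\<dots> = D m powr (1/p) * pnorm_on nu p f (S (Suc m))"
    unfolding pnorm_on_def using D_nonneg lp_sum_nonneg by (simp add: powr_mult)
  also have "infsum (\<lambda>i. W i * d i powr p) ?I = edge_sum w p f ?I"
    by (simp add: edge_sum_def W_def d_def case_prod_unfold mult.commute)
  finally show ?thesis by simp
qed

lemma layer_chain:
  assumes p: "1 \<le> p" and grad: "(\<lambda>(u, v). cmod (f u - f v) powr p * w u v) summable_on UNIV" and "m \<le> n"
  shows "(\<Prod>j<m. K j / D j) powr (1/p) * pnorm_on nu p f (S 0)
    \<le> pnorm_on nu p f (S m)
       + (\<Sum>k<m. chain_coeff k m powr (1/p) * edge_sum w p f (S k \<times> S (Suc k)) powr (1/p))"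
  using \<open>m \<le> n\<close>
proof (induction m)
  case 0
  then show ?case by simp
next
  case (Suc m)
  have m: "m < n" using Suc.prems by simp
  define r where "r = (K m / D m) powr (1/p)"
  define e where "e k = edge_sum w p f (S k \<times> S (Suc k)) powr (1/p)" for k
  have r_pos: "0 < r"
    using K_pos[OF m] D_pos[OF m] by (simp add: r_def)
  have coeff_Suc: "chain_coeff k (Suc m) powr (1/p) = r * chain_coeff k m powr (1/p)" if "k \<le> m" for k
    unfolding chain_coeff_Suc[OF that] r_def
    by (intro powr_mult divide_nonneg_nonneg K_nonneg D_nonneg chain_coeff_nonneg)
  have coeff_last: "chain_coeff m (Suc m) powr (1/p) = 1 / D m powr (1/p)"
    using chain_coeff_Suc[of m m] K_pos[OF m] D_pos[OF m] by (simp add: chain_coeff_self powr_divide)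
  have step: "r * pnorm_on nu p f (S m) \<le> pnorm_on nu p f (S (Suc m)) + e m / D m powr (1/p)"
  proof -
    have "r * pnorm_on nu p f (S m) = K m powr (1/p) * pnorm_on nu p f (S m) / D m powr (1/p)"
      using K_pos[OF m] D_pos[OF m] by (simp add: r_def powr_divide)
    also have "\<dots> \<le> (D m powr (1/p) * pnorm_on nu p f (S (Suc m)) + e m) / D m powr (1/p)"
      using layer_step[OF p m summable_on_subset_banach[OF grad]] by (intro divide_right_mono) (auto simp: e_def)
    also have "\<dots> = pnorm_on nu p f (S (Suc m)) + e m / D m powr (1/p)"
      using D_pos[OF m] by (simp add: field_simps)
    finally show ?thesis .
  qed
  have "(\<Prod>j<Suc m. K j / D j) powr (1/p) * pnorm_on nu p f (S 0)
      = r * ((\<Prod>j<m. K j / D j) powr (1/p) * pnorm_on nu p f (S 0))"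
    unfolding prod.lessThan_Suc mult.commute[of _ "K m / D m"] r_def
    by (subst powr_mult) (auto intro: divide_nonneg_nonneg prod_nonneg K_nonneg D_nonneg)
  also have "\<dots> \<le> r * (pnorm_on nu p f (S m) + (\<Sum>k<m. chain_coeff k m powr (1/p) * e k))"
    using Suc r_pos by (intro mult_left_mono) (auto simp: e_def)
  also have "\<dots> = r * pnorm_on nu p f (S m) + (\<Sum>k<m. chain_coeff k (Suc m) powr (1/p) * e k)"
    by (simp add: distrib_left sum_distrib_left coeff_Suc mult.assoc)
  also have "\<dots> \<le> pnorm_on nu p f (S (Suc m))
      + (e m / D m powr (1/p) + (\<Sum>k<m. chain_coeff k (Suc m) powr (1/p) * e k))"
    using step by simp
  also have "e m / D m powr (1/p) + (\<Sum>k<m. chain_coeff k (Suc m) powr (1/p) * e k)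
      = (\<Sum>k<Suc m. chain_coeff k (Suc m) powr (1/p) * e k)"
    by (simp add: coeff_last)
  finally show ?case by (simp add: e_def)
qed

end

definition lp_coeff :: "real \<Rightarrow> real \<Rightarrow> real"
  where "lp_coeff p q = (\<Sum>m=1..n. (\<Sum>k<m. chain_coeff k m powr (q/p)) powr (p/q)) powr (1/p)"

definition l1_coeff :: real
  where "l1_coeff = (if n = 0 then 0 else MAX k\<in>{..<n}. \<Sum>m=k..n. chain_coeff k m)"

lemma lp_coeff_eq:
  "lp_coeff p q = (\<Sum>m=1..n. (\<Sum>k<m. (1 / K k powr (q/p)) * (\<Prod>i\<in>{k..<m}. K i / D i) powr (q/p))
    powr (p/q)) powr (1/p)"
  by (simp add: lp_coeff_def chain_coeff_powr)

lemma l1_coeff_eq: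
  "l1_coeff = (if n = 0 then 0 else MAX k\<in>{..<n}. (1 / K k) * (\<Sum>m=k..n. \<Prod>i\<in>{k..<m}. K i / D i))"
  by (simp add: l1_coeff_def chain_coeff_def sum_distrib_left)

lemma lp_coeff_nonneg: "0 \<le> lp_coeff p q"
  by (simp add: lp_coeff_def)

lemma lp_coeff_pos:
  assumes "0 < n"
  shows "0 < lp_coeff p q"
proof -
  have "0 < (\<Sum>k<n. chain_coeff k n powr (q/p))"
    using chain_coeff_pos[of 0 n] assms by (intro sum_pos2[of _ 0]) auto
  then have "0 < (\<Sum>m=1..n. (\<Sum>k<m. chain_coeff k m powr (q/p)) powr (p/q))"
    using assms by (intro sum_pos2[of _ n]) auto
  then show ?thesis
    by (simp add: lp_coeff_def)
qed

lemma l1_coeff_ge: "k < n \<Longrightarrow> (\<Sum>m=k..n. chain_coeff k m) \<le> l1_coeff"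
  by (auto simp: l1_coeff_def intro!: Max_ge)

lemma l1_coeff_pos:
  assumes "0 < n"
  shows "0 < l1_coeff"
proof -
  have "0 < (\<Sum>m=0..n. chain_coeff 0 m)"
    using K_pos[OF assms] chain_coeff_nonneg by (intro sum_pos2[of _ 0]) (auto simp: chain_coeff_self)
  then show ?thesis
    using l1_coeff_ge[OF assms] by linarith
qed

lemma l1_coeff_nonneg: "0 \<le> l1_coeff"
  using l1_coeff_pos unfolding l1_coeff_def by fastforce

lemma chain_remainder_le:
  assumes pq: "1 < p" "1 < q" "1/p + 1/q = 1"
    and grad: "(\<lambda>(u, v). cmod (f u - f v) powr p * w u v) summable_on UNIV" and m: "m \<le> n"
  shows "(\<Sum>k<m. chain_coeff k m powr (1/p) * edge_sum w p f (S k \<times> S (Suc k)) powr (1/p))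
    \<le> (\<Sum>k<m. chain_coeff k m powr (q/p)) powr (1/q) * edge_sum w p f UNIV powr (1/p)"
proof -
  have "(\<Sum>k<m. chain_coeff k m powr (1/p) * edge_sum w p f (S k \<times> S (Suc k)) powr (1/p))
      \<le> (\<Sum>k<m. (chain_coeff k m powr (1/p)) powr q) powr (1/q)
        * (\<Sum>k<m. (edge_sum w p f (S k \<times> S (Suc k)) powr (1/p)) powr p) powr (1/p)"
    using pq by (intro holder_inequality_sum) auto
  also have "(\<Sum>k<m. (chain_coeff k m powr (1/p)) powr q) = (\<Sum>k<m. chain_coeff k m powr (q/p))"
    by (simp add: powr_powr)
  also have "(\<Sum>k<m. (edge_sum w p f (S k \<times> S (Suc k)) powr (1/p)) powr p)
      = (\<Sum>k<m. edge_sum w p f (S k \<times> S (Suc k)))"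
    using pq edge_sum_nonneg by (simp add: powr_powr)
  also have "(\<Sum>k<m. edge_sum w p f (S k \<times> S (Suc k))) powr (1/p) \<le> edge_sum w p f UNIV powr (1/p)"
    using sum_layers_edge_sum_le[OF grad m] pq by (intro powr_mono2) (auto intro: sum_nonneg edge_sum_nonneg)
  finally show ?thesis
    by (simp add: mult_left_mono)
qed

lemma chain_remainders_lp_le:
  assumes pq: "1 < p" "1 < q" "1/p + 1/q = 1"
    and grad: "(\<lambda>(u, v). cmod (f u - f v) powr p * w u v) summable_on UNIV"
  shows "(\<Sum>m=0..n. (\<Sum>k<m. chain_coeff k m powr (1/p) * edge_sum w p f (S k \<times> S (Suc k)) powr (1/p))
      powr p) powr (1/p) \<le> lp_coeff p q * edge_sum w p f UNIV powr (1/p)"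
proof -
  define g where "g m = (\<Sum>k<m. chain_coeff k m powr (1/p) * edge_sum w p f (S k \<times> S (Suc k)) powr (1/p))" for m
  define T where "T m = (\<Sum>k<m. chain_coeff k m powr (q/p))" for m
  define G where "G = edge_sum w p f UNIV"
  have G: "0 \<le> G" by (simp add: G_def edge_sum_nonneg)
  have g_le: "g m powr p \<le> T m powr (p/q) * G" if "m \<le> n" for m
  proof -
    have "g m powr p \<le> (T m powr (1/q) * G powr (1/p)) powr p"
      using chain_remainder_le[OF pq grad that] pq
      by (intro powr_mono2) (auto simp: g_def T_def G_def intro!: sum_nonneg)
    also have "\<dots> = T m powr (p/q) * G"
      using pq G by (simp add: T_def powr_mult powr_powr sum_nonneg)
    finally show ?thesis .
  qed
  have "(\<Sum>m=0..n. g m powr p) = (\<Sum>m=1..n. g m powr p)"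
    by (simp add: sum.atLeast_Suc_atMost g_def)
  also have "\<dots> \<le> (\<Sum>m=1..n. T m powr (p/q)) * G"
    unfolding sum_distrib_right by (rule sum_mono) (use g_le in auto)
  finally have "(\<Sum>m=0..n. g m powr p) powr (1/p) \<le> ((\<Sum>m=1..n. T m powr (p/q)) * G) powr (1/p)"
    using pq by (intro powr_mono2) (auto intro: sum_nonneg)
  also have "\<dots> = lp_coeff p q * G powr (1/p)"
    using G by (simp add: lp_coeff_def T_def powr_mult sum_nonneg)
  finally show ?thesis
    by (simp add: g_def G_def)
qed

lemma lp_estimate_finite:
  assumes pq: "1 < p" "1 < q" "1/p + 1/q = 1" and f: "in_lp nu p f"
    and grad: "(\<lambda>(u, v). cmod (f u - f v) powr p * w u v) summable_on UNIV"
  shows "(\<Sum>m=0..n. \<Prod>j<m. K j / D j) powr (1/p) * pnorm_on nu p f (S 0)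
    \<le> pnorm_on nu p f UNIV + lp_coeff p q * edge_sum w p f UNIV powr (1/p)"
proof -
  have p: "1 \<le> p" "0 < p" using pq by auto
  define a where "a m = pnorm_on nu p f (S m)" for m
  define g where "g m = (\<Sum>k<m. chain_coeff k m powr (1/p) * edge_sum w p f (S k \<times> S (Suc k)) powr (1/p))" for m
  define P where "P m = (\<Prod>j<m. K j / D j)" for m
  have P: "0 \<le> P m" for m
    unfolding P_def by (intro prod_nonneg divide_nonneg_nonneg K_nonneg D_nonneg)
  have a: "0 \<le> a m" "a m powr p = lp_sum nu p f (S m)" for m
    using p lp_sum_nonneg by (simp_all add: a_def pnorm_on_def powr_powr)
  have g: "0 \<le> g m" for m
    unfolding g_def by (intro sum_nonneg mult_nonneg_nonneg) simp_all
  have "(\<Sum>m=0..n. P m) powr (1/p) * a 0 = ((\<Sum>m=0..n. P m) * a 0 powr p) powr (1/p)"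
    using P a(1) p by (simp add: powr_mult powr_powr sum_nonneg)
  also have "\<dots> = (\<Sum>m=0..n. (P m powr (1/p) * a 0) powr p) powr (1/p)"
    using P a(1) p by (simp add: powr_mult powr_powr sum_distrib_right)
  also have "\<dots> \<le> (\<Sum>m=0..n. (a m + g m) powr p) powr (1/p)"
    using layer_chain[OF f p(1) grad] P a g p
    by (intro powr_mono2 sum_mono sum_nonneg) (auto simp: a_def g_def P_def)
  also have "\<dots> \<le> (\<Sum>m=0..n. a m powr p) powr (1/p) + (\<Sum>m=0..n. g m powr p) powr (1/p)"
    using minkowski_infsum[OF p(1), of "{0..n}" "\<lambda>_. 1" a g] a g by simp
  also have "(\<Sum>m=0..n. a m powr p) powr (1/p) \<le> pnorm_on nu p f UNIV"
    unfolding a pnorm_on_def using sum_layers_lp_sum_le[OF f] p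
    by (intro powr_mono2) (auto simp: atLeast0AtMost intro: sum_nonneg lp_sum_nonneg)
  also have "(\<Sum>m=0..n. g m powr p) powr (1/p) \<le> lp_coeff p q * edge_sum w p f UNIV powr (1/p)"
    unfolding g_def by (rule chain_remainders_lp_le[OF pq grad])
  finally show ?thesis
    by (simp add: a_def P_def)
qed

lemma l1_estimate_finite:
  assumes f: "in_lp nu 1 f"
    and grad: "(\<lambda>(u, v). cmod (f u - f v) powr 1 * w u v) summable_on UNIV"
  shows "(\<Sum>m=0..n. \<Prod>j<m. K j / D j) * pnorm_on nu 1 f (S 0)
    \<le> pnorm_on nu 1 f UNIV + l1_coeff * edge_sum w 1 f UNIV"
proof -
  define e where "e k = edge_sum w 1 f (S k \<times> S (Suc k))" for k
  have pnorm_1: "pnorm_on nu 1 f A = lp_sum nu 1 f A" for A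
    by (simp add: pnorm_on_def lp_sum_nonneg)
  have chain: "(\<Prod>j<m. K j / D j) * lp_sum nu 1 f (S 0) \<le> lp_sum nu 1 f (S m) + (\<Sum>k<m. chain_coeff k m * e k)"
    if "m \<le> n" for m
    using layer_chain[of 1 f, OF f _ grad that]
    by (simp add: pnorm_1 e_def prod_nonneg divide_nonneg_nonneg K_nonneg D_nonneg chain_coeff_nonneg
        edge_sum_nonneg)
  have column: "(\<Sum>m=Suc k..n. chain_coeff k m) \<le> l1_coeff" if "k < n" for k
  proof -
    have "(\<Sum>m=Suc k..n. chain_coeff k m) \<le> (\<Sum>m=k..n. chain_coeff k m)"
      by (intro sum_mono2 chain_coeff_nonneg) auto
    then show ?thesis
      using l1_coeff_ge[OF that] by linarith
  qed
  have "(\<Sum>m=0..n. \<Prod>j<m. K j / D j) * lp_sum nu 1 f (S 0) = (\<Sum>m\<le>n. (\<Prod>j<m. K j / D j) * lp_sum nu 1 f (S 0))"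
    by (simp add: sum_distrib_right atLeast0AtMost)
  also have "\<dots> \<le> (\<Sum>m\<le>n. lp_sum nu 1 f (S m) + (\<Sum>k<m. chain_coeff k m * e k))"
    by (rule sum_mono) (use chain in auto)
  also have "\<dots> = (\<Sum>m\<le>n. lp_sum nu 1 f (S m)) + (\<Sum>k<n. (\<Sum>m=Suc k..n. chain_coeff k m) * e k)"
    by (simp add: sum.distrib sum.nested_swap' sum_distrib_right)
  also have "\<dots> \<le> lp_sum nu 1 f UNIV + (\<Sum>k<n. l1_coeff * e k)"
    using sum_layers_lp_sum_le[OF f] column edge_sum_nonneg
    by (intro add_mono sum_mono mult_right_mono) (auto simp: e_def)
  also have "(\<Sum>k<n. l1_coeff * e k) \<le> l1_coeff * edge_sum w 1 f UNIV"
    unfolding sum_distrib_left[symmetric] e_def using sum_layers_edge_sum_le[OF grad] l1_coeff_nonneg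
    by (intro mult_left_mono) auto
  finally show ?thesis
    by (simp add: pnorm_1)
qed

lemma lp_estimate:
  assumes pq: "1 < p" "1 < q" "1/p + 1/q = 1" and f: "in_lp nu p f"
  shows "ereal ((\<Sum>m=0..n. \<Prod>j<m. K j / D j) powr (1/p) * pnorm_on nu p f (S 0))
    \<le> ereal (pnorm_on nu p f UNIV) + ereal (lp_coeff p q) * grad_norm w p f"
proof (rule ereal_le_add_mult[OF lp_coeff_nonneg grad_norm_not_minf])
  show "(\<Sum>m=0..n. \<Prod>j<m. K j / D j) powr (1/p) * pnorm_on nu p f (S 0) \<le> pnorm_on nu p f UNIV
      \<or> 0 < lp_coeff p q"
    using pnorm_on_mono[OF f] lp_coeff_pos pq by (cases "n = 0") auto
  show "(\<Sum>m=0..n. \<Prod>j<m. K j / D j) powr (1/p) * pnorm_on nu p f (S 0)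
      \<le> pnorm_on nu p f UNIV + lp_coeff p q * g" if "grad_norm w p f = ereal g" for g
    using grad_norm_eq_ereal[OF that] lp_estimate_finite[OF pq f] by simp
qed

lemma l1_estimate:
  assumes f: "in_lp nu 1 f"
  shows "ereal ((\<Sum>m=0..n. \<Prod>j<m. K j / D j) * pnorm_on nu 1 f (S 0))
    \<le> ereal (pnorm_on nu 1 f UNIV) + ereal l1_coeff * grad_norm w 1 f"
proof (rule ereal_le_add_mult[OF l1_coeff_nonneg grad_norm_not_minf])
  show "(\<Sum>m=0..n. \<Prod>j<m. K j / D j) * pnorm_on nu 1 f (S 0) \<le> pnorm_on nu 1 f UNIV \<or> 0 < l1_coeff"
    using pnorm_on_mono[OF f] l1_coeff_pos by (cases "n = 0") auto
  show "(\<Sum>m=0..n. \<Prod>j<m. K j / D j) * pnorm_on nu 1 f (S 0) \<le> pnorm_on nu 1 f UNIV + l1_coeff * g"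
    if "grad_norm w 1 f = ereal g" for g
    using grad_norm_eq_ereal[OF that] l1_estimate_finite[OF f] by (simp add: edge_sum_nonneg)
qed

end

theorem theorem1p3:
  fixes w :: "'v::countable \<Rightarrow> 'v \<Rightarrow> real" and nu :: "'v \<Rightarrow> real"
    and S :: "nat \<Rightarrow> 'v set" and n :: nat
  assumes w_nonneg: "\<And>u v. 0 \<le> w u v"
    and w_sym: "\<And>u v. w u v = w v u"
    and w_diag: "\<And>u. w u u = 0"
    and nu_pos: "\<And>v. 0 < nu v"
    and disj: "\<And>i j. i \<le> n \<Longrightarrow> j \<le> n \<Longrightarrow> i \<noteq> j \<Longrightarrow> S i \<inter> S j = {}"
    and K_pos: "\<And>m. m < n \<Longrightarrow> 0 < Khat w nu S m \<and> Khat w nu S m < \<infinity>"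
    and D_pos: "\<And>m. m < n \<Longrightarrow> 0 < Dhat w nu S m \<and> Dhat w nu S m < \<infinity>"
  shows "(\<forall>p q f. 1 < p \<and> 1 < q \<and> 1 / p + 1 / q = 1 \<and> in_lp nu p f \<longrightarrow>
            ereal (pnorm_on nu p f UNIV)
            + ereal ((\<Sum>m=1..n. (\<Sum>k<m.
                  (1 / real_of_ereal (Khat w nu S k) powr (q / p)) *
                  (\<Prod>i\<in>{k..<m}. real_of_ereal (Khat w nu S i) / real_of_ereal (Dhat w nu S i))
                     powr (q / p)) powr (p / q)) powr (1 / p))
              * grad_norm w p f
            \<ge> ereal ((\<Sum>m=0..n. \<Prod>j<m. real_of_ereal (Khat w nu S j) / real_of_ereal (Dhat w nu S j))
                     powr (1 / p) * pnorm_on nu p f (S 0)))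
       \<and> (\<forall>f. in_lp nu 1 f \<longrightarrow>
            ereal (pnorm_on nu 1 f UNIV)
            + ereal (if n = 0 then 0 else
                 MAX k\<in>{..<n}. (1 / real_of_ereal (Khat w nu S k)) *
                   (\<Sum>m=k..n. \<Prod>i\<in>{k..<m}. real_of_ereal (Khat w nu S i) / real_of_ereal (Dhat w nu S i)))
              * grad_norm w 1 f
            \<ge> ereal ((\<Sum>m=0..n. \<Prod>j<m. real_of_ereal (Khat w nu S j) / real_of_ereal (Dhat w nu S j))
                     * pnorm_on nu 1 f (S 0)))"
proof -
  interpret graph_layers w nu S n
    using w_nonneg w_sym nu_pos disj K_pos D_pos by unfold_locales
  show ?thesis
    using lp_estimate l1_estimate unfolding lp_coeff_eq l1_coeff_eq K_def D_def by auto
qed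

end
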